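(* Every point $(d_1,d_3)\in S_{13}$ satisfies $d_1\le 3d_3+3/8$.
   Context: For a finite graph $G$ and a $k$-vertex graph $H$, $d(H,G)$ is the probability that a uniformly random $k$-element subset of $V(G)$ induces a subgraph isomorphic to $H$. For $k\in\{0,1,2,3\}$ let $H_k$ be the 3-vertex graph with exactly $k$ edges. Let $S\subseteq\mathbb{R}^4$ be the set of all $(d_0,d_1,d_2,d_3)$ such that for every $\varepsilon>0$ and every $n\in\mathbb{N}$ there is a graph $G$ with at least $n$ vertices satisfying $|d(H_k,G)-d_k|\le\varepsilon$ for $k=0,1,2,3$. For $i<j$, $S_{ij}=\{(d_i,d_j):(d_0,d_1,d_2,d_3)\in S\}$. *)

theory Defs
  imports Complex_Main
begin

definition is_graph :: "nat \<Rightarrow> nat set set \<Rightarrow> bool" where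
  "is_graph N E \<longleftrightarrow> (\<forall>e\<in>E. e \<subseteq> {0..<N} \<and> card e = 2)"

definition induced_edges :: "nat set set \<Rightarrow> nat set \<Rightarrow> nat" where
  "induced_edges E T = card {e \<in> E. e \<subseteq> T}"

text \<open>d(H_k, G): probability that a uniformly random 3-subset of the vertices induces
  a graph isomorphic to H_k, the 3-vertex graph with exactly k edges (a 3-vertex graph
  is isomorphic to H_k iff it has exactly k edges).\<close>
definition dens3 :: "nat \<Rightarrow> nat \<Rightarrow> nat set set \<Rightarrow> real" where
  "dens3 k N E = real (card {T. T \<subseteq> {0..<N} \<and> card T = 3 \<and> induced_edges E T = k})
                 / real (N choose 3)"

definition S_set :: "(real \<times> real \<times> real \<times> real) set" where
  "S_set = {(d0, d1, d2, d3). \<forall>\<epsilon>>0. \<forall>n::nat. \<exists>N E. is_graph N E \<and> N \<ge> n \<and>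
      \<bar>dens3 0 N E - d0\<bar> \<le> \<epsilon> \<and> \<bar>dens3 1 N E - d1\<bar> \<le> \<epsilon> \<and>
      \<bar>dens3 2 N E - d2\<bar> \<le> \<epsilon> \<and> \<bar>dens3 3 N E - d3\<bar> \<le> \<epsilon>}"

definition S13 :: "(real \<times> real) set" where
  "S13 = {(d1, d3). \<exists>d0 d2. (d0, d1, d2, d3) \<in> S_set}"

end

theory Submission
  imports Defs
begin

text \<open>Give an ordered triple (x, y, z) the
  weight 3 [xy \<in> E] - 6 [xy \<in> E] [xz \<in> E]; summed over the six orderings of a 3-set T
  this is 6 ([T spans exactly one edge] - 3 [T is a triangle]).  Summed over all ordered
  triples of an n-vertex graph the weights give \<Sum>v. 3 n d(v) - 6 d(v)^2, and each term is
  at most 3 n^2 / 8 because 6 (d - n/4)^2 \<ge> 0.  Hence the number of 3-sets spanning one edge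
  minus three times the number of triangles is at most n^3 / 16, so that
  d1 - 3 d3 \<le> 3/8 + O(1/n).\<close>

lemma distinct_triples_over_3_subset:
  assumes T: "T = {a, b, c}" "distinct [a, b, c]"
  shows "{(x, y, z). distinct [x, y, z] \<and> {x, y, z} = T}
       = {(a, b, c), (a, c, b), (b, a, c), (b, c, a), (c, a, b), (c, b, a)}" (is "?L = ?R")
proof
  show "?L \<subseteq> ?R"
  proof
    fix p assume "p \<in> ?L"
    then obtain x y z where p: "p = (x, y, z)" "distinct [x, y, z]" and "{x, y, z} = T"
      by auto
    then have "x \<in> {a, b, c}" "y \<in> {a, b, c}" "z \<in> {a, b, c}"
      using T(1) by blast+
    then show "p \<in> ?R"
      using p by (simp only: insert_iff empty_iff) (elim disjE; simp)
  qed
  show "?R \<subseteq> ?L"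
    using T by (auto simp: insert_commute)
qed

lemma sum_over_permutations_3:
  fixes F :: "'a \<Rightarrow> 'a \<Rightarrow> 'a \<Rightarrow> 'b::comm_monoid_add"
  assumes "distinct [a, b, c]"
  shows "(\<Sum>(x, y, z)\<in>{(a, b, c), (a, c, b), (b, a, c), (b, c, a), (c, a, b), (c, b, a)}. F x y z)
       = F a b c + F a c b + F b a c + F b c a + F c a b + F c b a"
  using assms by (simp add: add.assoc)

lemma sum_distinct_triples_eq_sum_3_subsets:
  fixes F :: "'a \<Rightarrow> 'a \<Rightarrow> 'a \<Rightarrow> 'b::comm_monoid_add"
  assumes "finite V"
    and six: "\<And>x y z. x \<in> V \<Longrightarrow> y \<in> V \<Longrightarrow> z \<in> V \<Longrightarrow> distinct [x, y, z] \<Longrightarrow>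
      F x y z + F x z y + F y x z + F y z x + F z x y + F z y x = G {x, y, z}"
  shows "(\<Sum>(x, y, z)\<in>{(x, y, z) \<in> V \<times> V \<times> V. distinct [x, y, z]}. F x y z)
       = (\<Sum>T\<in>{T. T \<subseteq> V \<and> card T = 3}. G T)"
proof -
  define D where "D = {(x, y, z) \<in> V \<times> V \<times> V. distinct [x, y, z]}"
  define set3 :: "'a \<times> 'a \<times> 'a \<Rightarrow> 'a set" where "set3 = (\<lambda>(x, y, z). {x, y, z})"
  have "(\<Sum>(x, y, z)\<in>D. F x y z)
      = (\<Sum>T\<in>{T. T \<subseteq> V \<and> card T = 3}. \<Sum>(x, y, z)\<in>{p \<in> D. set3 p = T}. F x y z)"
  proof (rule sum.group[symmetric])
    show "finite D"
      using \<open>finite V\<close> by (auto simp: D_def intro: finite_subset[of _ "V \<times> V \<times> V"])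
    show "finite {T. T \<subseteq> V \<and> card T = 3}"
      using \<open>finite V\<close> by (auto intro: finite_subset[of _ "Pow V"])
    show "set3 ` D \<subseteq> {T. T \<subseteq> V \<and> card T = 3}"
      by (auto simp: D_def set3_def card_3_iff)
  qed
  also have "\<dots> = (\<Sum>T\<in>{T. T \<subseteq> V \<and> card T = 3}. G T)"
  proof (rule sum.cong[OF refl])
    fix T assume "T \<in> {T. T \<subseteq> V \<and> card T = 3}"
    then have "T \<subseteq> V" "card T = 3" by auto
    then obtain a b c where "T = {a, b, c}" "a \<noteq> b" "b \<noteq> c" "a \<noteq> c"
      using card_3_iff by metis
    then have T: "T = {a, b, c}" "distinct [a, b, c]" by auto
    have "{p \<in> D. set3 p = T} = {(x, y, z). distinct [x, y, z] \<and> {x, y, z} = T}"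
      using \<open>T \<subseteq> V\<close> by (auto simp: D_def set3_def)
    also have "\<dots> = {(a, b, c), (a, c, b), (b, a, c), (b, c, a), (c, a, b), (c, b, a)}"
      by (rule distinct_triples_over_3_subset[OF T])
    finally have fiber:
      "{p \<in> D. set3 p = T} = {(a, b, c), (a, c, b), (b, a, c), (b, c, a), (c, a, b), (c, b, a)}" .
    have "a \<in> V" "b \<in> V" "c \<in> V"
      using \<open>T \<subseteq> V\<close> unfolding T(1) by auto
    from six[OF this T(2)] have "F a b c + F a c b + F b a c + F b c a + F c a b + F c b a = G T"
      unfolding T(1) .
    then show "(\<Sum>(x, y, z)\<in>{p \<in> D. set3 p = T}. F x y z) = G T"
      unfolding fiber sum_over_permutations_3[OF T(2)] .
  qed
  finally show ?thesis unfolding D_def .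
qed

lemma sum_distinct_triples_nested:
  fixes F :: "'a \<Rightarrow> 'a \<Rightarrow> 'a \<Rightarrow> 'b::comm_monoid_add"
  assumes "finite V"
  shows "(\<Sum>(x, y, z)\<in>{(x, y, z) \<in> V \<times> V \<times> V. distinct [x, y, z]}. F x y z)
       = (\<Sum>x\<in>V. \<Sum>y\<in>V. \<Sum>z\<in>V. if distinct [x, y, z] then F x y z else 0)"
proof -
  have "{(x, y, z) \<in> V \<times> V \<times> V. distinct [x, y, z]}
      = {p \<in> V \<times> V \<times> V. case p of (x, y, z) \<Rightarrow> distinct [x, y, z]}"
    by auto
  then show ?thesis
    using assms by (simp add: sum.inter_filter sum.cartesian_product split_def)
qed

lemma sum_distinct_triples_edge:
  fixes a :: "'a \<Rightarrow> 'a \<Rightarrow> real"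
  assumes "finite V" and loopless: "\<And>x. a x x = 0"
  shows "(\<Sum>x\<in>V. \<Sum>y\<in>V. \<Sum>z\<in>V. if distinct [x, y, z] then a x y else 0)
       = (real (card V) - 2) * (\<Sum>x\<in>V. \<Sum>y\<in>V. a x y)"
proof -
  have "(\<Sum>z\<in>V. if distinct [x, y, z] then a x y else 0) = (real (card V) - 2) * a x y"
    if "x \<in> V" "y \<in> V" for x y
  proof (cases "x = y")
    case False
    have "card V \<ge> 2"
      using that False \<open>finite V\<close> by (metis card_2_iff card_mono empty_subsetI insert_subset)
    moreover have "{z \<in> V. distinct [x, y, z]} = V - {x, y}"
      using False by auto
    ultimately show ?thesis
      using that False \<open>finite V\<close> by (simp add: sum.inter_filter[symmetric] card_Diff_subset of_nat_diff)
  qed (simp add: loopless)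
  then show ?thesis
    by (simp add: sum_distrib_left)
qed

lemma sum_distinct_triples_path:
  fixes a :: "'a \<Rightarrow> 'a \<Rightarrow> real"
  assumes "finite V" and loopless: "\<And>x. a x x = 0" and idem: "\<And>x y. a x y * a x y = a x y"
  shows "(\<Sum>x\<in>V. \<Sum>y\<in>V. \<Sum>z\<in>V. if distinct [x, y, z] then a x y * a x z else 0)
       = (\<Sum>x\<in>V. (\<Sum>y\<in>V. a x y)\<^sup>2 - (\<Sum>y\<in>V. a x y))"
proof -
  have "(if distinct [x, y, z] then a x y * a x z else 0)
      = a x y * a x z - (if y = z then a x y * a x z else 0)" for x y z
    by (cases "x = y"; cases "x = z"; cases "y = z") (auto simp: loopless)
  then have "(\<Sum>y\<in>V. \<Sum>z\<in>V. if distinct [x, y, z] then a x y * a x z else 0)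
      = (\<Sum>y\<in>V. a x y)\<^sup>2 - (\<Sum>y\<in>V. a x y)" for x
    using \<open>finite V\<close> by (simp add: sum_subtractf power2_eq_square sum_product idem)
  then show ?thesis by simp
qed

definition adj :: "nat set set \<Rightarrow> nat \<Rightarrow> nat \<Rightarrow> real" where
  "adj E x y = of_bool ({x, y} \<in> E)"

lemma adj_loopless: "is_graph N E \<Longrightarrow> adj E x x = 0"
  by (auto simp: adj_def is_graph_def)

lemma adj_idem: "adj E x y * adj E x y = adj E x y"
  by (simp add: adj_def)

lemma induced_edges_triangle:
  assumes "is_graph N E" and "distinct [x, y, z]"
  shows "real (induced_edges E {x, y, z}) = adj E x y + adj E y z + adj E x z"
proof -
  have "{e \<in> E. e \<subseteq> {x, y, z}} = {{x, y}, {y, z}, {x, z}} \<inter> E"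
  proof
    show "{e \<in> E. e \<subseteq> {x, y, z}} \<subseteq> {{x, y}, {y, z}, {x, z}} \<inter> E"
    proof
      fix e assume e: "e \<in> {e \<in> E. e \<subseteq> {x, y, z}}"
      then have "card e = 2"
        using \<open>is_graph N E\<close> by (auto simp: is_graph_def)
      then obtain u v where uv: "e = {u, v}" "u \<noteq> v"
        by (auto simp: card_2_iff)
      have "u \<in> {x, y, z}" "v \<in> {x, y, z}"
        using e uv by auto
      then show "e \<in> {{x, y}, {y, z}, {x, z}} \<inter> E"
        using e uv by (auto simp: insert_commute)
    qed
  qed auto
  then have "induced_edges E {x, y, z} = (\<Sum>e\<in>{{x, y}, {y, z}, {x, z}}. of_bool (e \<in> E))"
    by (simp add: induced_edges_def Int_def conj_commute)
  then show ?thesis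
    using \<open>distinct [x, y, z]\<close> by (simp add: adj_def doubleton_eq_iff)
qed

text \<open>Summed over the six orderings of three vertices spanning k edges and p paths of
  length two, this weight is 6 (k - 2 p): each edge occurs twice as the leading pair and each
  path twice with its centre first.  That is 6 for k = 1, -18 for k = 3 and 0 otherwise.\<close>
definition edge_path_weight :: "nat set set \<Rightarrow> nat \<Rightarrow> nat \<Rightarrow> nat \<Rightarrow> real" where
  "edge_path_weight E x y z = 3 * adj E x y - 6 * (adj E x y * adj E x z)"

lemma edge_path_weight_permutations:
  assumes "is_graph N E" and "distinct [x, y, z]"
  shows "edge_path_weight E x y z + edge_path_weight E x z y + edge_path_weight E y x z
       + edge_path_weight E y z x + edge_path_weight E z x y + edge_path_weight E z y x
       = 6 * (of_bool (induced_edges E {x, y, z} = 1) - 3 * of_bool (induced_edges E {x, y, z} = 3))"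
proof -
  have k: "real (induced_edges E {x, y, z}) = adj E x y + adj E y z + adj E x z"
    by (rule induced_edges_triangle[OF assms])
  show ?thesis
    unfolding edge_path_weight_def
    using k by (cases "{x, y} \<in> E"; cases "{y, z} \<in> E"; cases "{x, z} \<in> E")
      (simp_all add: adj_def insert_commute)
qed

definition triples_with_edges :: "nat \<Rightarrow> nat \<Rightarrow> nat set set \<Rightarrow> nat set set" where
  "triples_with_edges k N E = {T. T \<subseteq> {0..<N} \<and> card T = 3 \<and> induced_edges E T = k}"

lemma linear_minus_square_le: "3 * n * t - 6 * t\<^sup>2 \<le> 3 * n\<^sup>2 / 8" for n t :: real
proof -
  have "0 \<le> 6 * (t - n / 4)\<^sup>2" by simp
  then show ?thesis by (simp add: power2_eq_square algebra_simps)
qed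

lemma card_triples_with_edges_1_3:
  assumes "is_graph N E"
  shows "real (card (triples_with_edges 1 N E)) - 3 * real (card (triples_with_edges 3 N E))
       \<le> real N ^ 3 / 16"
proof -
  define V where "V = {0..<N}"
  define deg where "deg x = (\<Sum>y\<in>V. adj E x y)" for x
  define k where "k T = induced_edges E T" for T
  have "finite V" by (simp add: V_def)
  have "finite {T. T \<subseteq> V \<and> card T = 3}"
    using \<open>finite V\<close> by (auto intro: finite_subset[of _ "Pow V"])
  then have "6 * (real (card (triples_with_edges 1 N E)) - 3 * real (card (triples_with_edges 3 N E)))
      = (\<Sum>T\<in>{T. T \<subseteq> V \<and> card T = 3}. 6 * (of_bool (k T = 1) - 3 * of_bool (k T = 3)))"
    by (simp add: triples_with_edges_def V_def k_def sum_subtractf sum_distrib_left Int_def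
        conj_assoc)
  also have "\<dots> = (\<Sum>(x, y, z)\<in>{(x, y, z) \<in> V \<times> V \<times> V. distinct [x, y, z]}. edge_path_weight E x y z)"
    using edge_path_weight_permutations[OF assms]
    by (intro sum_distinct_triples_eq_sum_3_subsets[symmetric] \<open>finite V\<close>) (simp add: k_def)
  also have "\<dots> = 3 * (\<Sum>x\<in>V. \<Sum>y\<in>V. \<Sum>z\<in>V. if distinct [x, y, z] then adj E x y else 0)
      - 6 * (\<Sum>x\<in>V. \<Sum>y\<in>V. \<Sum>z\<in>V. if distinct [x, y, z] then adj E x y * adj E x z else 0)"
  proof -
    have "(if distinct [x, y, z] then edge_path_weight E x y z else 0)
        = 3 * (if distinct [x, y, z] then adj E x y else 0)
          - 6 * (if distinct [x, y, z] then adj E x y * adj E x z else 0)" for x y z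
      by (simp add: edge_path_weight_def)
    then show ?thesis
      unfolding sum_distinct_triples_nested[OF \<open>finite V\<close>]
      by (simp only: sum_subtractf sum_distrib_left)
  qed
  also have "\<dots> = 3 * ((real N - 2) * (\<Sum>x\<in>V. deg x)) - 6 * (\<Sum>x\<in>V. (deg x)\<^sup>2 - deg x)"
    unfolding deg_def
    using sum_distinct_triples_edge[where a = "adj E", OF \<open>finite V\<close> adj_loopless[OF assms]]
      sum_distinct_triples_path[where a = "adj E", OF \<open>finite V\<close> adj_loopless[OF assms] adj_idem]
    by (simp add: V_def)
  also have "\<dots> = (\<Sum>x\<in>V. 3 * real N * deg x - 6 * (deg x)\<^sup>2)"
    by (simp add: sum_subtractf sum_distrib_left algebra_simps)
  also have "\<dots> \<le> (\<Sum>x\<in>V. 3 * (real N)\<^sup>2 / 8)"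
    by (intro sum_mono linear_minus_square_le)
  also have "\<dots> = 6 * (real N ^ 3 / 16)"
    by (simp add: V_def power2_eq_square power3_eq_cube)
  finally show ?thesis by simp
qed

lemma real_choose_2: "real (N choose 2) * 2 = real N * (real N - 1)"
  by (induction N) (auto simp: algebra_simps numeral_2_eq_2)

lemma real_choose_3: "real (N choose 3) * 6 = real N * (real N - 1) * (real N - 2)"
proof (induction N)
  case (Suc N)
  have "Suc N choose 3 = (N choose 2) + (N choose 3)"
    by (simp add: numeral_3_eq_3 numeral_2_eq_2)
  then show ?case
    using Suc real_choose_2[of N] by (simp add: algebra_simps)
qed simp

lemma cube_le_choose_3:
  assumes "N \<ge> 3"
  shows "real N ^ 3 / 16 \<le> (3 / 8 + 2 / (real N - 2)) * real (N choose 3)"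
proof -
  define n where "n = real N"
  have "n \<ge> 3" using assms by (simp add: n_def)
  have "n ^ 3 / 16 \<le> n ^ 3 / 16 + n * (7 * n - 10) / 48"
    using \<open>n \<ge> 3\<close> by simp
  also have "\<dots> = (3 / 8 + 2 / (n - 2)) * (n * (n - 1) * (n - 2) / 6)"
    using \<open>n \<ge> 3\<close> by (simp add: field_simps power3_eq_cube)
  also have "n * (n - 1) * (n - 2) / 6 = real (N choose 3)"
    using real_choose_3[of N] by (simp add: n_def)
  finally show ?thesis
    by (simp add: n_def)
qed

lemma dens3_1_minus_3_dens3_3_le:
  assumes "is_graph N E" and "N \<ge> 3"
  shows "dens3 1 N E - 3 * dens3 3 N E \<le> 3 / 8 + 2 / (real N - 2)"
proof -
  have "real (N choose 3) > 0"
    using \<open>N \<ge> 3\<close> by simp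
  moreover have "dens3 k N E = real (card (triples_with_edges k N E)) / real (N choose 3)" for k
    by (simp add: dens3_def triples_with_edges_def)
  ultimately show ?thesis
    using card_triples_with_edges_1_3[OF assms(1)] cube_le_choose_3[OF assms(2)]
    by (simp add: diff_divide_distrib[symmetric] divide_le_eq)
qed

theorem lemma6:
  fixes d1 d3 :: real
  assumes "(d1, d3) \<in> S13"
  shows "d1 \<le> 3 * d3 + 3 / 8"
proof (rule field_le_epsilon)
  fix \<epsilon> :: real assume "\<epsilon> > 0"
  obtain d0 d2 where "(d0, d1, d2, d3) \<in> S_set"
    using assms by (auto simp: S13_def)
  then obtain N E where "is_graph N E" and N: "N \<ge> nat \<lceil>4 / \<epsilon>\<rceil> + 3"
    and d1: "\<bar>dens3 1 N E - d1\<bar> \<le> \<epsilon> / 8" and d3: "\<bar>dens3 3 N E - d3\<bar> \<le> \<epsilon> / 8"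
    using \<open>\<epsilon> > 0\<close> unfolding S_set_def
    by (auto dest!: spec[of _ "\<epsilon> / 8"] spec[of _ "nat \<lceil>4 / \<epsilon>\<rceil> + 3"])
  have "real N - 2 > 0" and "real N - 2 \<ge> 4 / \<epsilon>"
    using N by linarith+
  moreover from this(2) \<open>\<epsilon> > 0\<close> have "4 \<le> \<epsilon> * (real N - 2)"
    by (simp add: pos_divide_le_eq mult.commute)
  ultimately have "2 / (real N - 2) \<le> \<epsilon> / 2"
    by (simp add: divide_le_eq field_simps)
  then show "d1 \<le> 3 * d3 + 3 / 8 + \<epsilon>"
    using dens3_1_minus_3_dens3_3_le[OF \<open>is_graph N E\<close>] N d1 d3 by linarith
qed

end
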